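(* Let $(B_j)_{j\ge1}$ be a sequence of Cantor-built subsets of $[0,1]$ such that $m(B_j)=\frac{1}{(e-1)\,j!}$ for all $j$, $m(B_j\cap B_k)=0$ whenever $j\neq k$, $m(\bigcup_j B_j)=1$, and for each nondegenerate subinterval $J\subset[0,1]$ there is $j_0\in\mathbb{N}$ such that for every $j\ge j_0$ some Cantor component of $B_j$ is contained in $J$. Let $\{\theta_\alpha:\alpha<\mathfrak{c}\}$ be a set of real numbers strictly greater than $1$ such that $\{\ln\theta_\alpha:\alpha<\mathfrak{c}\}$ is linearly independent over $\mathbb{Q}$, and for each $\alpha<\mathfrak{c}$ put $g_\alpha=\sum_{j=1}^\infty \theta_\alpha^j\chi_{B_j}$. Then $\{g_\alpha:\alpha<\mathfrak{c}\}$ is a set of free generators (in the algebra of measurable functions on $[0,1]$ modulo a.e. equality, with pointwise operations), and the algebra generated by this set is contained in $\mathcal{G}\cup\{0\}$. In particular, $\mathcal{G}$ is strongly $\mathfrak{c}$-algebrable.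
   Context: $m$ denotes Lebesgue measure and $\mathfrak{c}$ the cardinality of the continuum. $\mathcal{G}$ is the set of Lebesgue integrable functions on $[0,1]$ that are not essentially bounded on any nondegenerate subinterval of $[0,1]$. A Cantor set in $[a,b]$ is a perfect, uncountable, nowhere dense subset of $[a,b]$ containing $a$ and $b$, obtained by removing from $[a,b]$ a countable union of pairwise disjoint open intervals. A nonvoid set $B\subset[0,1]$ is Cantor-built with Cantor components $A_j$ ($j\in\Gamma$) if $B=\bigcup_{j\in\Gamma}A_j$, each $A_j$ is a Cantor set in some subinterval $[c_j,d_j]\subset[0,1]$, and $m([c_j,d_j]\cap[c_k,d_k])=0$ for $j\neq k$. In a commutative algebra, a set $Z=\{z_\alpha:\alpha<\kappa\}$ is a set of free generators if for every polynomial $P$ without constant term and distinct $z_{\alpha_1},\dots,z_{\alpha_n}\in Z$, $P(z_{\alpha_1},\dots,z_{\alpha_n})=0$ iff $P=0$. A subset $S$ of an algebra is strongly $\kappa$-algebrable if there is a $\kappa$-generated free algebra contained in $S\cup\{0\}$. *)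

theory Defs
  imports "HOL-Analysis.Analysis" "HOL-Library.Equipollence"
begin

definition cantor_set :: "real set \<Rightarrow> real \<Rightarrow> real \<Rightarrow> bool" where
  "cantor_set A a b \<longleftrightarrow>
     A \<subseteq> {a..b} \<and> a \<in> A \<and> b \<in> A \<and>
     closed A \<and> (\<forall>x\<in>A. x islimpt A) \<and>
     uncountable A \<and>
     interior (closure A) = {} \<and>
     (\<exists>\<U>. countable \<U> \<and> (\<forall>U\<in>\<U>. \<exists>p q. U = {p<..<q}) \<and> disjoint \<U> \<and>
          A = {a..b} - \<Union>\<U>)"

definition cantor_built ::
  "real set \<Rightarrow> 'i set \<Rightarrow> ('i \<Rightarrow> real set) \<Rightarrow> ('i \<Rightarrow> real) \<Rightarrow> ('i \<Rightarrow> real) \<Rightarrow> bool" where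
  "cantor_built B \<Gamma> A c d \<longleftrightarrow>
     B \<noteq> {} \<and> B = (\<Union>j\<in>\<Gamma>. A j) \<and>
     (\<forall>j\<in>\<Gamma>. {c j..d j} \<subseteq> {0..1} \<and> cantor_set (A j) (c j) (d j)) \<and>
     (\<forall>j\<in>\<Gamma>. \<forall>k\<in>\<Gamma>. j \<noteq> k \<longrightarrow> measure lebesgue ({c j..d j} \<inter> {c k..d k}) = 0)"

definition nondeg_subinterval :: "real set \<Rightarrow> bool" where
  "nondeg_subinterval J \<longleftrightarrow> is_interval J \<and> J \<subseteq> {0..1} \<and> (\<exists>x\<in>J. \<exists>y\<in>J. x < y)"

definition inG :: "(real \<Rightarrow> real) \<Rightarrow> bool" where
  "inG f \<longleftrightarrow> integrable (lebesgue_on {0..1}) f \<and>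
     (\<forall>J. nondeg_subinterval J \<longrightarrow> \<not> (\<exists>M. AE x in lebesgue_on J. \<bar>f x\<bar> \<le> M))"

text \<open>Real polynomials in the variables X_0,...,X_(n-1): a finitely supported
coefficient function on exponent vectors, exponents vanishing beyond n.\<close>
definition poly_in :: "nat \<Rightarrow> ((nat \<Rightarrow> nat) \<Rightarrow> real) \<Rightarrow> bool" where
  "poly_in n P \<longleftrightarrow> finite {k. P k \<noteq> 0} \<and> (\<forall>k. P k \<noteq> 0 \<longrightarrow> (\<forall>i\<ge>n. k i = 0))"

definition peval :: "((nat \<Rightarrow> nat) \<Rightarrow> real) \<Rightarrow> (nat \<Rightarrow> real) \<Rightarrow> real" where
  "peval P z = (\<Sum>k\<in>{k. P k \<noteq> 0}. P k * (\<Prod>i\<in>{i. k i \<noteq> 0}. z i ^ k i))"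

definition no_const_term :: "((nat \<Rightarrow> nat) \<Rightarrow> real) \<Rightarrow> bool" where
  "no_const_term P \<longleftrightarrow> P (\<lambda>_. 0) = 0"

end

theory Submission
  imports Defs
begin

text \<open>On the piece \<open>B j\<close> each generator \<open>g \<alpha>\<close> equals \<open>\<theta> \<alpha> ^ j\<close>, and almost every point of
\<open>[0,1]\<close> lies in exactly one piece. Hence a polynomial \<open>P\<close> without constant term in
\<open>g (\<alpha> 0), ..., g (\<alpha> (n-1))\<close> equals \<open>v j = \<Sum>k. P k * \<mu> k ^ j\<close> on \<open>B j\<close>, where the monomial values
\<open>\<mu> k = \<Prod>i. \<theta> (\<alpha> i) ^ k i\<close> exceed 1. Such an exponential sum either vanishes identically or
tends to infinity in absolute value, the largest base with nonzero coefficient dominating;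
\<open>\<rat>\<close>-independence of the \<open>ln (\<theta> \<alpha>)\<close> makes \<open>k \<mapsto> \<mu> k\<close> injective, so the second case occurs
whenever \<open>P \<noteq> 0\<close>. Because \<open>m (B j)\<close> is proportional to \<open>1 / j!\<close>, the series \<open>\<Sum>j. \<bar>v j\<bar> * m (B j)\<close>
converges, so \<open>P(g)\<close> is integrable; and since the pieces are nowhere dense, every interval
contains a subinterval missing \<open>B 1, ..., B (N-1)\<close>, on which \<open>\<bar>P(g)\<bar>\<close> is almost everywhere large.\<close>

definition monomial_value :: "(nat \<Rightarrow> real) \<Rightarrow> (nat \<Rightarrow> nat) \<Rightarrow> real" where
  "monomial_value z k = (\<Prod>i\<in>{i. k i \<noteq> 0}. z i ^ k i)"

lemma peval_eq_sum_monomial_value: "peval P z = (\<Sum>k\<in>{k. P k \<noteq> 0}. P k * monomial_value z k)"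
  by (simp add: peval_def monomial_value_def)

lemma monomial_value_power: "monomial_value (\<lambda>i. z i ^ j) k = monomial_value z k ^ j"
  by (simp add: monomial_value_def prod_power_distrib mult.commute flip: power_mult)

lemma monomial_value_eq_prod_lessThan:
  assumes "\<And>i. n \<le> i \<Longrightarrow> k i = 0"
  shows "monomial_value z k = (\<Prod>i<n. z i ^ k i)"
  unfolding monomial_value_def
proof (rule prod.mono_neutral_left)
  show "{i. k i \<noteq> 0} \<subseteq> {..<n}"
  proof
    fix i assume "i \<in> {i. k i \<noteq> 0}"
    then show "i \<in> {..<n}" using assms[of i] by (cases "i < n") auto
  qed
qed auto

lemma monomial_value_gt_1:
  assumes supp: "\<And>i. n \<le> i \<Longrightarrow> k i = 0" and "k \<noteq> (\<lambda>_. 0)" and gt: "\<And>i. i < n \<Longrightarrow> 1 < z i"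
  shows "1 < monomial_value z k"
proof -
  obtain i where "k i \<noteq> 0" using \<open>k \<noteq> (\<lambda>_. 0)\<close> by auto
  then have "i < n" using supp[of i] by (cases "i < n") auto
  have "1 < (\<Prod>i<n. z i ^ k i)"
  proof (rule less_1_prod2)
    show "1 < z i ^ k i" using gt[OF \<open>i < n\<close>] \<open>k i \<noteq> 0\<close> by simp
    show "1 \<le> z i ^ k i" if "i \<in> {..<n}" for i using gt[of i] that by simp
  qed (use \<open>i < n\<close> in auto)
  then show ?thesis using monomial_value_eq_prod_lessThan[OF supp] by simp
qed

lemma inj_on_monomial_value:
  assumes indep: "\<And>q. (\<Sum>i<n. of_rat (q i) * ln (z i)) = 0 \<Longrightarrow> \<forall>i<n. q i = 0"
    and pos: "\<And>i. i < n \<Longrightarrow> 0 < z i"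
  shows "inj_on (monomial_value z) {k. \<forall>i\<ge>n. k i = 0}"
proof (rule inj_onI)
  fix k k' assume k: "k \<in> {k. \<forall>i\<ge>n. k i = 0}" and k': "k' \<in> {k. \<forall>i\<ge>n. k i = 0}"
    and eq: "monomial_value z k = monomial_value z k'"
  have ln_mv: "ln (monomial_value z k) = (\<Sum>i<n. real (k i) * ln (z i))"
    if "k \<in> {k. \<forall>i\<ge>n. k i = 0}" for k
  proof -
    have "monomial_value z k = (\<Prod>i<n. z i ^ k i)"
      using that by (intro monomial_value_eq_prod_lessThan) auto
    moreover have "ln (\<Prod>i<n. z i ^ k i) = (\<Sum>i<n. ln (z i ^ k i))"
    proof (rule ln_prod)
      show "z i ^ k i \<noteq> 0" if "i \<in> {..<n}" for i using pos[of i] that by simp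
    qed simp
    moreover have "\<dots> = (\<Sum>i<n. real (k i) * ln (z i))"
      using pos by (intro sum.cong refl) (simp add: ln_realpow)
    ultimately show ?thesis by simp
  qed
  define q :: "nat \<Rightarrow> rat" where "q i = of_int (int (k i) - int (k' i))" for i
  have "(\<Sum>i<n. of_rat (q i) * ln (z i)) = ln (monomial_value z k) - ln (monomial_value z k')"
    by (simp add: ln_mv[OF k] ln_mv[OF k'] q_def of_rat_diff left_diff_distrib sum_subtractf)
  then have "\<forall>i<n. q i = 0" using eq by (intro indep) simp
  then have "k i = k' i" for i
    using k k' by (cases "i < n") (auto simp: q_def)
  then show "k = k'" by blast
qed

lemma filterlim_abs_sum_powers_at_top:
  fixes M :: "real set" and c :: "real \<Rightarrow> real"
  assumes fin: "finite M" and gt: "\<And>\<mu>. \<mu> \<in> M \<Longrightarrow> 1 < \<mu>" and nz: "\<exists>\<mu>\<in>M. c \<mu> \<noteq> 0"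
  shows "filterlim (\<lambda>j::nat. \<bar>\<Sum>\<mu>\<in>M. c \<mu> * \<mu> ^ j\<bar>) at_top sequentially"
proof -
  define M' where "M' = {\<mu>\<in>M. c \<mu> \<noteq> 0}"
  have "finite M'" "M' \<noteq> {}" using fin nz by (auto simp: M'_def)
  define l where "l = Max M'"
  have "l \<in> M'" and l_max: "\<And>\<mu>. \<mu> \<in> M' \<Longrightarrow> \<mu> \<le> l"
    using \<open>finite M'\<close> \<open>M' \<noteq> {}\<close> by (simp_all add: l_def)
  then have "1 < l" and "c l \<noteq> 0" using gt by (auto simp: M'_def)
  text \<open>Factoring out the dominant power \<open>l ^ j\<close> leaves a sequence tending to \<open>c l \<noteq> 0\<close>.\<close>
  have "(\<lambda>j. \<Sum>\<mu>\<in>M'-{l}. c \<mu> * (\<mu>/l) ^ j) \<longlonglongrightarrow> (\<Sum>\<mu>\<in>M'-{l}. c \<mu> * 0)"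
  proof (intro tendsto_intros LIMSEQ_power_zero)
    fix \<mu> assume "\<mu> \<in> M'-{l}"
    then have "1 < \<mu>" "\<mu> < l" using l_max gt by (auto simp: M'_def order.strict_iff_order)
    then show "norm (\<mu>/l) < 1" by simp
  qed
  then have "(\<lambda>j. c l + (\<Sum>\<mu>\<in>M'-{l}. c \<mu> * (\<mu>/l) ^ j)) \<longlonglongrightarrow> c l"
    using tendsto_add[OF tendsto_const] by fastforce
  moreover have "(\<Sum>\<mu>\<in>M'. c \<mu> * (\<mu>/l) ^ j) = c l + (\<Sum>\<mu>\<in>M'-{l}. c \<mu> * (\<mu>/l) ^ j)" for j
    using \<open>l \<in> M'\<close> \<open>finite M'\<close> \<open>1 < l\<close> by (simp add: sum.remove)
  ultimately have "(\<lambda>j. \<bar>\<Sum>\<mu>\<in>M'. c \<mu> * (\<mu>/l) ^ j\<bar>) \<longlonglongrightarrow> \<bar>c l\<bar>"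
    by (intro tendsto_rabs) simp
  moreover have "filterlim (\<lambda>j::nat. l ^ j) at_top sequentially"
    using \<open>1 < l\<close> filterlim_realpow_sequentially_gt1[of l]
    by (auto dest: filterlim_at_infinity_imp_norm_at_top simp: norm_power)
  ultimately have "filterlim (\<lambda>j. \<bar>\<Sum>\<mu>\<in>M'. c \<mu> * (\<mu>/l) ^ j\<bar> * l ^ j) at_top sequentially"
    using \<open>c l \<noteq> 0\<close> by (intro filterlim_tendsto_pos_mult_at_top) auto
  moreover have "\<bar>\<Sum>\<mu>\<in>M'. c \<mu> * (\<mu>/l) ^ j\<bar> * l ^ j = \<bar>\<Sum>\<mu>\<in>M. c \<mu> * \<mu> ^ j\<bar>" for j
  proof -
    have "(\<Sum>\<mu>\<in>M'. c \<mu> * (\<mu>/l) ^ j) * l ^ j = (\<Sum>\<mu>\<in>M'. c \<mu> * \<mu> ^ j)"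
      using \<open>1 < l\<close> by (simp add: sum_distrib_right power_divide)
    also have "\<dots> = (\<Sum>\<mu>\<in>M. c \<mu> * \<mu> ^ j)"
      by (rule sum.mono_neutral_left) (auto simp: M'_def fin)
    finally show ?thesis
      using \<open>1 < l\<close> by (metis abs_mult abs_of_pos zero_less_one less_trans zero_less_power)
  qed
  ultimately show ?thesis by simp
qed

lemma sum_powers_group:
  fixes c \<mu> :: "'k \<Rightarrow> real"
  assumes "finite S"
  shows "(\<Sum>k\<in>S. c k * \<mu> k ^ j) = (\<Sum>y\<in>\<mu> ` S. (\<Sum>k\<in>{k\<in>S. \<mu> k = y}. c k) * y ^ j)"
proof -
  have "(\<Sum>k\<in>S. c k * \<mu> k ^ j) = (\<Sum>y\<in>\<mu> ` S. \<Sum>k\<in>{k\<in>S. \<mu> k = y}. c k * \<mu> k ^ j)"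
    by (rule sum.image_gen[OF assms])
  also have "\<dots> = (\<Sum>y\<in>\<mu> ` S. (\<Sum>k\<in>{k\<in>S. \<mu> k = y}. c k) * y ^ j)"
    by (intro sum.cong refl) (simp add: sum_distrib_right)
  finally show ?thesis .
qed

lemma sum_powers_eq_0_or_filterlim_at_top:
  fixes \<mu> :: "'k \<Rightarrow> real"
  assumes "finite S" and "\<And>k. k \<in> S \<Longrightarrow> 1 < \<mu> k"
  shows "(\<forall>j. (\<Sum>k\<in>S. c k * \<mu> k ^ j) = 0)
    \<or> filterlim (\<lambda>j. \<bar>\<Sum>k\<in>S. c k * \<mu> k ^ j\<bar>) at_top sequentially"
proof (cases "\<exists>y\<in>\<mu> ` S. (\<Sum>k\<in>{k\<in>S. \<mu> k = y}. c k) \<noteq> 0")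
  case True
  then show ?thesis
    using assms filterlim_abs_sum_powers_at_top[of "\<mu> ` S" "\<lambda>y. \<Sum>k\<in>{k\<in>S. \<mu> k = y}. c k"]
    by (auto simp: sum_powers_group[OF \<open>finite S\<close>])
next
  case False
  then show ?thesis by (auto simp: sum_powers_group[OF \<open>finite S\<close>] intro!: sum.neutral)
qed

lemma sum_powers_filterlim_at_top_inj:
  fixes \<mu> :: "'k \<Rightarrow> real"
  assumes "finite S" "inj_on \<mu> S" "\<And>k. k \<in> S \<Longrightarrow> 1 < \<mu> k" "k \<in> S" "c k \<noteq> 0"
  shows "filterlim (\<lambda>j. \<bar>\<Sum>k\<in>S. c k * \<mu> k ^ j\<bar>) at_top sequentially"
proof -
  have "{k'\<in>S. \<mu> k' = \<mu> k} = {k}" using assms(2,4) by (auto dest: inj_onD)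
  then show ?thesis
    using assms filterlim_abs_sum_powers_at_top[of "\<mu> ` S" "\<lambda>y. \<Sum>k\<in>{k\<in>S. \<mu> k = y}. c k"]
    by (force simp: sum_powers_group[OF \<open>finite S\<close>])
qed

lemma summable_abs_sum_powers_over_fact:
  fixes \<mu> :: "'k \<Rightarrow> real"
  assumes "finite S" and "\<And>k. k \<in> S \<Longrightarrow> 0 \<le> \<mu> k"
  shows "summable (\<lambda>j. \<bar>\<Sum>k\<in>S. c k * \<mu> k ^ j\<bar> / fact j)"
proof (rule summable_comparison_test')
  show "summable (\<lambda>j. \<Sum>k\<in>S. \<bar>c k\<bar> * (inverse (fact j) * \<mu> k ^ j))"
    by (intro summable_sum summable_mult summable_exp)
  show "norm (\<bar>\<Sum>k\<in>S. c k * \<mu> k ^ j\<bar> / fact j) \<le> (\<Sum>k\<in>S. \<bar>c k\<bar> * (inverse (fact j) * \<mu> k ^ j))"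
    for j
  proof -
    have "\<bar>\<Sum>k\<in>S. c k * \<mu> k ^ j\<bar> \<le> (\<Sum>k\<in>S. \<bar>c k\<bar> * \<mu> k ^ j)"
      using assms(2) by (auto intro!: order.trans[OF sum_abs] sum_mono simp: abs_mult)
    then have "inverse (fact j) * \<bar>\<Sum>k\<in>S. c k * \<mu> k ^ j\<bar> \<le> inverse (fact j) * (\<Sum>k\<in>S. \<bar>c k\<bar> * \<mu> k ^ j)"
      by (rule mult_left_mono) simp
    then show ?thesis
      by (simp add: divide_inverse sum_distrib_left mult_ac)
  qed
qed

lemma cantor_set_lt: "cantor_set A a b \<Longrightarrow> a < b"
proof (rule ccontr)
  assume "cantor_set A a b" "\<not> a < b"
  then have "A \<subseteq> {a}" and "uncountable A" by (auto simp: cantor_set_def)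
  then show False using countable_subset by blast
qed

lemma cantor_set_subset: "cantor_set A a b \<Longrightarrow> A \<subseteq> {a..b}"
  by (simp add: cantor_set_def)

lemma cantor_set_closed_interior_empty: "cantor_set A a b \<Longrightarrow> closed A \<and> interior A = {}"
  unfolding cantor_set_def by (metis closure_closed)

lemma cantor_built_component: "cantor_built B \<Gamma> A c d \<Longrightarrow> i \<in> \<Gamma> \<Longrightarrow> cantor_set (A i) (c i) (d i)"
  by (simp add: cantor_built_def)

lemma cantor_built_subset: "cantor_built B \<Gamma> A c d \<Longrightarrow> B \<subseteq> {0..1}"
  by (fastforce simp: cantor_built_def cantor_set_def)

lemma closed_interior_empty_avoids_subinterval:
  fixes K :: "real set"
  assumes "closed K" "interior K = {}" "u < v"
  obtains u' v' where "u' < v'" "{u'<..<v'} \<subseteq> {u<..<v}" "K \<inter> {u'<..<v'} = {}"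
proof -
  have "\<not> {u<..<v} \<subseteq> K"
    using assms interior_maximal[of "{u<..<v}" K] by auto
  then obtain x where x: "x \<in> {u<..<v} - K" by blast
  moreover have "open ({u<..<v} - K)" using assms(1) by auto
  ultimately obtain e where "0 < e" "ball x e \<subseteq> {u<..<v} - K"
    using open_contains_ball by blast
  moreover have "ball x e = {x-e<..<x+e}"
    by (auto simp: ball_def dist_real_def abs_less_iff)
  ultimately show thesis by (intro that[of "x-e" "x+e"]) auto
qed

lemma null_overlap_interval_disjoint:
  fixes a b a' b' :: real
  assumes "a < b" "a' < b'" "measure lebesgue ({a..b} \<inter> {a'..b'}) = 0"
  shows "{a<..<b} \<inter> {a'..b'} = {}"
proof (rule ccontr)
  assume "{a<..<b} \<inter> {a'..b'} \<noteq> {}"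
  then have "max a a' < min b b'" using assms(1,2) by auto
  then show False
    using assms(3) by (simp add: Int_atLeastAtMost min_def max_def split: if_splits)
qed

lemma cantor_built_avoids_subinterval:
  assumes cb: "cantor_built B \<Gamma> A c d" and "u < v"
  obtains u' v' where "u' < v'" "{u'<..<v'} \<subseteq> {u<..<v}" "B \<inter> {u'<..<v'} = {}"
proof (cases "\<exists>i\<in>\<Gamma>. max u (c i) < min v (d i)")
  case True
  then obtain i where i: "i \<in> \<Gamma>" "max u (c i) < min v (d i)" by blast
  have Ai: "cantor_set (A i) (c i) (d i)" by (rule cantor_built_component[OF cb i(1)])
  obtain u' v' where uv': "u' < v'" "{u'<..<v'} \<subseteq> {max u (c i)<..<min v (d i)}"
      "A i \<inter> {u'<..<v'} = {}"
    using closed_interior_empty_avoids_subinterval[of "A i", OF _ _ i(2)]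
      cantor_set_closed_interior_empty[OF Ai] by blast
  have "A k \<inter> {u'<..<v'} = {}" if "k \<in> \<Gamma>" "k \<noteq> i" for k
  proof -
    have Ak: "cantor_set (A k) (c k) (d k)" by (rule cantor_built_component[OF cb that(1)])
    have "measure lebesgue ({c i..d i} \<inter> {c k..d k}) = 0"
      using cb i(1) that by (simp add: cantor_built_def)
    then have "{c i<..<d i} \<inter> {c k..d k} = {}"
      using cantor_set_lt[OF Ai] cantor_set_lt[OF Ak] by (rule null_overlap_interval_disjoint[rotated 2])
    moreover have "{u'<..<v'} \<subseteq> {c i<..<d i}" using uv'(2) by auto
    ultimately show ?thesis using cantor_set_subset[OF Ak] by blast
  qed
  then have "B \<inter> {u'<..<v'} = {}"
    using cb uv'(3) by (auto simp: cantor_built_def)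
  then show thesis using uv' by (intro that[of u' v']) auto
next
  case False
  have "A k \<inter> {u<..<v} = {}" if "k \<in> \<Gamma>" for k
  proof -
    have Ak: "cantor_set (A k) (c k) (d k)" by (rule cantor_built_component[OF cb that])
    have "\<not> max u (c k) < min v (d k)" using False that by blast
    then have "{c k..d k} \<inter> {u<..<v} = {}" using cantor_set_lt[OF Ak] by auto
    then show ?thesis using cantor_set_subset[OF Ak] by blast
  qed
  then have "B \<inter> {u<..<v} = {}"
    using cb by (auto simp: cantor_built_def)
  then show thesis using \<open>u < v\<close> by (intro that[of u v]) auto
qed

lemma cantor_built_finite_avoids_subinterval:
  assumes "finite F" "\<And>j. j \<in> F \<Longrightarrow> cantor_built (B j) (\<Gamma> j) (A j) (c j) (d j)" "u < v"
  shows "\<exists>u' v'. u' < v' \<and> {u'<..<v'} \<subseteq> {u<..<v} \<and> (\<forall>j\<in>F. B j \<inter> {u'<..<v'} = {})"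
  using assms
proof (induction F rule: finite_induct)
  case empty
  then show ?case by blast
next
  case (insert j F)
  then obtain u' v' where "u' < v'" "{u'<..<v'} \<subseteq> {u<..<v}" "\<forall>j\<in>F. B j \<inter> {u'<..<v'} = {}"
    by blast
  moreover obtain u'' v'' where "u'' < v''" "{u''<..<v''} \<subseteq> {u'<..<v'}" "B j \<inter> {u''<..<v''} = {}"
    using cantor_built_avoids_subinterval[OF insert.prems(1) \<open>u' < v'\<close>] by blast
  ultimately show ?case by blast
qed

lemma null_sets_lebesgue_if_measure_0:
  fixes S :: "real set"
  assumes "S \<in> sets lebesgue" "S \<subseteq> {a..b}" "measure lebesgue S = 0"
  shows "S \<in> null_sets lebesgue"
proof -
  have "emeasure lebesgue S \<le> emeasure lebesgue {a..b}" by (rule emeasure_mono) (use assms in auto)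
  then have "emeasure lebesgue S \<noteq> \<infinity>" by (auto simp: top_unique emeasure_lborel_Icc_eq)
  then show ?thesis using assms by (simp add: emeasure_eq_ennreal_measure null_setsI)
qed

lemma not_AE_lebesgue_notin_interval:
  fixes u v :: real
  assumes "u < v"
  shows "\<not> (AE x in lebesgue. x \<notin> {u<..<v})"
proof
  assume "AE x in lebesgue. x \<notin> {u<..<v}"
  then have "emeasure lebesgue {u<..<v} = 0" by (subst AE_iff_measurable[symmetric]) auto
  then show False using assms by simp
qed

locale cantor_partition =
  fixes B :: "nat \<Rightarrow> real set"
    and \<Gamma> :: "nat \<Rightarrow> 'i set" and A :: "nat \<Rightarrow> 'i \<Rightarrow> real set"
    and c d :: "nat \<Rightarrow> 'i \<Rightarrow> real"
  assumes built: "\<And>j. j \<ge> 1 \<Longrightarrow> cantor_built (B j) (\<Gamma> j) (A j) (c j) (d j)"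
    and meas: "\<And>j. j \<ge> 1 \<Longrightarrow> measure lebesgue (B j) = 1 / ((exp 1 - 1) * fact j)"
    and overlap: "\<And>j k. j \<ge> 1 \<Longrightarrow> k \<ge> 1 \<Longrightarrow> j \<noteq> k \<Longrightarrow> measure lebesgue (B j \<inter> B k) = 0"
    and union: "measure lebesgue (\<Union>j\<in>{1..}. B j) = 1"
begin

lemma B_subset: "j \<ge> 1 \<Longrightarrow> B j \<subseteq> {0..1}"
  using built cantor_built_subset by blast

lemma measure_B_pos: "j \<ge> 1 \<Longrightarrow> 0 < measure lebesgue (B j)"
  using meas by simp

(* A non-measurable set would have measure 0 by the library's convention. *)
lemma B_sets: "j \<ge> 1 \<Longrightarrow> B j \<in> sets lebesgue"
  using measure_B_pos measure_notin_sets by fastforce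

lemma emeasure_B:
  assumes "j \<ge> 1"
  shows "emeasure lebesgue (B j) = ennreal (1 / ((exp 1 - 1) * fact j))"
proof -
  have "emeasure lebesgue (B j) \<noteq> \<infinity>"
    using measure_B_pos[OF assms] by (auto simp: measure_def)
  then show ?thesis by (simp add: emeasure_eq_ennreal_measure meas[OF assms])
qed

definition lies_only_in :: "real \<Rightarrow> nat \<Rightarrow> bool" where
  "lies_only_in x j \<longleftrightarrow> j \<ge> 1 \<and> x \<in> B j \<and> (\<forall>k\<ge>1. k \<noteq> j \<longrightarrow> x \<notin> B k)"

lemma AE_lies_only_in: "AE x in lebesgue. x \<in> {0..1} \<longrightarrow> (\<exists>j. lies_only_in x j)"
proof -
  define U where "U = (\<Union>j\<in>{1..}. B j)"
  have "U \<in> sets lebesgue" "U \<subseteq> {0..1}" using B_sets B_subset by (auto simp: U_def)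
  then have "measure lebesgue ({0..1} - U) = 0"
    using union by (simp add: measure_Diff U_def)
  then have uncovered: "{0..1} - U \<in> null_sets lebesgue"
    using \<open>U \<in> sets lebesgue\<close> by (intro null_sets_lebesgue_if_measure_0) auto
  have "B j \<inter> B k \<in> null_sets lebesgue" if "1 \<le> j" "1 \<le> k" "j \<noteq> k" for j k
    using that B_sets B_subset overlap by (intro null_sets_lebesgue_if_measure_0[of _ 0 1]) auto
  then have overlaps: "(\<Union>j\<in>{1..}. \<Union>k\<in>{1..} - {j}. B j \<inter> B k) \<in> null_sets lebesgue"
    by (intro null_sets_UN') auto
  have cover: "x \<in> ({0..1} - U) \<union> (\<Union>j\<in>{1..}. \<Union>k\<in>{1..} - {j}. B j \<inter> B k)"
    if "x \<in> {0..1}" and none: "\<not> (\<exists>j. lies_only_in x j)" for x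
  proof (cases "x \<in> U")
    case True
    then obtain j where "1 \<le> j" "x \<in> B j" by (auto simp: U_def)
    moreover obtain k where "1 \<le> k" "k \<noteq> j" "x \<in> B k"
      using none calculation by (auto simp: lies_only_in_def)
    ultimately show ?thesis by blast
  qed (use \<open>x \<in> {0..1}\<close> in blast)
  show ?thesis
  proof (rule AE_I'[OF null_sets.Un[OF uncovered overlaps]], rule subsetI)
    fix x assume "x \<in> {x \<in> space lebesgue. \<not> (x \<in> {0..1} \<longrightarrow> (\<exists>j. lies_only_in x j))}"
    then show "x \<in> ({0..1} - U) \<union> (\<Union>j\<in>{1..}. \<Union>k\<in>{1..} - {j}. B j \<inter> B k)"
      using cover by simp
  qed
qed

lemma AE_lies_only_in_on: "AE x in lebesgue_on {0..1}. \<exists>j. lies_only_in x j"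
  using AE_lies_only_in by (subst AE_restrict_space_iff) auto

lemma suminf_indicator_lies_only_in:
  fixes a :: "nat \<Rightarrow> 'a::{t2_space, topological_comm_monoid_add, semiring_1}"
  assumes "lies_only_in x j"
  shows "(\<Sum>i. a (Suc i) * indicator (B (Suc i)) x) = a j"
proof -
  have "(\<Sum>i. a (Suc i) * indicator (B (Suc i)) x) = (\<Sum>i\<in>{j-1}. a (Suc i) * indicator (B (Suc i)) x)"
    using assms by (intro suminf_finite) (auto simp: lies_only_in_def)
  also have "\<dots> = a j" using assms by (simp add: lies_only_in_def)
  finally show ?thesis .
qed

lemma indicator_series_measurable:
  "(\<lambda>x. \<Sum>i. a i * indicator (B (Suc i)) x :: real) \<in> borel_measurable (lebesgue_on {0..1})"
proof (rule borel_measurable_suminf)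
  fix i
  have "B (Suc i) \<in> sets lebesgue" using B_sets by simp
  then show "(\<lambda>x. a i * indicator (B (Suc i)) x) \<in> borel_measurable (lebesgue_on {0..1})"
    by (intro borel_measurable_times borel_measurable_const measurable_restrict_space1
        borel_measurable_indicator)
qed

lemma AE_eq_0_iff_pieces:
  assumes f: "\<And>x j. lies_only_in x j \<Longrightarrow> f x = v j"
  shows "(AE x in lebesgue_on {0..1}. f x = 0) \<longleftrightarrow> (\<forall>j\<ge>1. v j = 0)"
proof
  assume v0: "\<forall>j\<ge>1. v j = 0"
  show "AE x in lebesgue_on {0..1}. f x = 0"
    using AE_lies_only_in_on
  proof eventually_elim
    case (elim x)
    then obtain j where "lies_only_in x j" by blast
    then show "f x = 0" using v0 f[of x j] by (simp add: lies_only_in_def)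
  qed
next
  assume f0: "AE x in lebesgue_on {0..1}. f x = 0"
  show "\<forall>j\<ge>1. v j = 0"
  proof (intro allI impI, rule ccontr)
    fix j :: nat assume "1 \<le> j" "v j \<noteq> 0"
    have "AE x in lebesgue_on {0..1}. x \<notin> B j"
      using f0 AE_lies_only_in_on
    proof eventually_elim
      case (elim x)
      then obtain k where k: "lies_only_in x k" by blast
      show "x \<notin> B j"
      proof
        assume "x \<in> B j"
        then have "k = j" using k \<open>1 \<le> j\<close> unfolding lies_only_in_def by blast
        then show False using f[OF k] elim(1) \<open>v j \<noteq> 0\<close> by simp
      qed
    qed
    then have "AE x in lebesgue. x \<in> {0..1} \<longrightarrow> x \<notin> B j"
      by (subst (asm) AE_restrict_space_iff) auto
    then have "AE x in lebesgue. x \<notin> B j"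
      by eventually_elim (use B_subset[OF \<open>1 \<le> j\<close>] in blast)
    moreover have "{x \<in> space lebesgue. \<not> x \<notin> B j} = B j" by simp
    ultimately have "emeasure lebesgue (B j) = 0"
      by (subst (asm) AE_iff_measurable[OF B_sets[OF \<open>1 \<le> j\<close>]])
    then show False
      using emeasure_B[OF \<open>1 \<le> j\<close>] by simp
  qed
qed

lemma AE_in_late_pieces:
  assumes "{u<..<w} \<subseteq> {0..1}" "\<And>j. 1 \<le> j \<Longrightarrow> j < N \<Longrightarrow> B j \<inter> {u<..<w} = {}"
  shows "AE x in lebesgue. x \<in> {u<..<w} \<longrightarrow> (\<exists>j\<ge>N. lies_only_in x j)"
  using AE_lies_only_in
proof eventually_elim
  case (elim x)
  show ?case
  proof
    assume "x \<in> {u<..<w}"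
    then obtain j where j: "lies_only_in x j" using elim assms(1) by blast
    have "N \<le> j"
    proof (rule ccontr)
      assume "\<not> N \<le> j"
      then have "B j \<inter> {u<..<w} = {}" using assms(2) j by (simp add: lies_only_in_def)
      then show False using j \<open>x \<in> {u<..<w}\<close> by (auto simp: lies_only_in_def)
    qed
    then show "\<exists>j\<ge>N. lies_only_in x j" using j by blast
  qed
qed

lemma not_ess_bounded_if_pieces_unbounded:
  fixes f :: "real \<Rightarrow> real" and v :: "nat \<Rightarrow> real"
  assumes f: "\<And>x j. lies_only_in x j \<Longrightarrow> f x = v j"
    and lim: "filterlim (\<lambda>j. \<bar>v j\<bar>) at_top sequentially" and J: "nondeg_subinterval J"
  shows "\<not> (\<exists>M. AE x in lebesgue_on J. \<bar>f x\<bar> \<le> M)"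
proof
  assume "\<exists>M. AE x in lebesgue_on J. \<bar>f x\<bar> \<le> M"
  then obtain M where M: "AE x in lebesgue_on J. \<bar>f x\<bar> \<le> M" by blast
  obtain N where N: "\<And>j. N \<le> j \<Longrightarrow> M + 1 \<le> \<bar>v j\<bar>"
    using lim by (auto simp: filterlim_at_top eventually_sequentially)
  obtain x y where "x \<in> J" "y \<in> J" "x < y" and "is_interval J" "J \<subseteq> {0..1}"
    using J by (auto simp: nondeg_subinterval_def)
  then have "{x<..<y} \<subseteq> J"
    unfolding is_interval_1 by (meson greaterThanLessThan_iff less_imp_le subsetI)
  text \<open>By nowhere density, a subinterval avoids the finitely many pieces on which \<open>\<bar>v j\<bar> \<le> M\<close> is possible.\<close>
  have "\<And>j. j \<in> {1..<N} \<Longrightarrow> cantor_built (B j) (\<Gamma> j) (A j) (c j) (d j)"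
    using built by simp
  then obtain u w where uw: "u < w" "{u<..<w} \<subseteq> {x<..<y}" "\<forall>j\<in>{1..<N}. B j \<inter> {u<..<w} = {}"
    using cantor_built_finite_avoids_subinterval[OF finite_atLeastLessThan _ \<open>x < y\<close>] by blast
  have late: "AE z in lebesgue. z \<in> {u<..<w} \<longrightarrow> (\<exists>j\<ge>N. lies_only_in z j)"
  proof (rule AE_in_late_pieces)
    show "{u<..<w} \<subseteq> {0..1}" using uw(2) \<open>{x<..<y} \<subseteq> J\<close> \<open>J \<subseteq> {0..1}\<close> by blast
    show "B j \<inter> {u<..<w} = {}" if "1 \<le> j" "j < N" for j using uw(3) that by simp
  qed
  have "AE z in lebesgue. z \<in> J \<longrightarrow> \<bar>f z\<bar> \<le> M"
    using M \<open>is_interval J\<close>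
    by (subst (asm) AE_restrict_space_iff) (auto simp: real_interval_borel_measurable)
  then have "AE z in lebesgue. z \<notin> {u<..<w}"
    using late
  proof eventually_elim
    case (elim z)
    show ?case
    proof
      assume "z \<in> {u<..<w}"
      then obtain j where "N \<le> j" "lies_only_in z j" using elim(2) by blast
      then have "M + 1 \<le> \<bar>f z\<bar>" using N f by simp
      then show False using elim(1) \<open>z \<in> {u<..<w}\<close> \<open>{u<..<w} \<subseteq> {x<..<y}\<close> \<open>{x<..<y} \<subseteq> J\<close>
        by auto
    qed
  qed
  then show False using not_AE_lebesgue_notin_interval \<open>u < w\<close> by blast
qed

lemma sets_lebesgue_on_B: "j \<ge> 1 \<Longrightarrow> B j \<in> sets (lebesgue_on {0..1})"
  using B_sets B_subset by (subst sets_restrict_space_iff) auto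

lemma nn_integral_on_B:
  assumes "j \<ge> 1" "0 \<le> a"
  shows "(\<integral>\<^sup>+ x. ennreal a * indicator (B j) x \<partial>lebesgue_on {0..1}) = ennreal (a / fact j / (exp 1 - 1))"
proof -
  have "emeasure (lebesgue_on {0..1}) (B j) = ennreal (1 / ((exp 1 - 1) * fact j))"
    using B_subset[OF assms(1)] emeasure_B[OF assms(1)] by (simp add: emeasure_restrict_space)
  then have "(\<integral>\<^sup>+ x. ennreal a * indicator (B j) x \<partial>lebesgue_on {0..1})
      = ennreal a * ennreal (1 / ((exp 1 - 1) * fact j))"
    by (simp only: nn_integral_cmult_indicator[OF sets_lebesgue_on_B[OF assms(1)]])
  also have "\<dots> = ennreal (a * (1 / ((exp 1 - 1) * fact j)))"
    using assms(2) by (intro ennreal_mult[symmetric]) simp_all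
  also have "\<dots> = ennreal (a / fact j / (exp 1 - 1))" by (simp add: field_simps)
  finally show ?thesis .
qed

lemma integrable_if_pieces_summable:
  fixes f :: "real \<Rightarrow> real"
  assumes f: "\<And>x j. lies_only_in x j \<Longrightarrow> f x = v j"
    and f_meas: "f \<in> borel_measurable (lebesgue_on {0..1})"
    and summ: "summable (\<lambda>j. \<bar>v j\<bar> / fact j)"
  shows "integrable (lebesgue_on {0..1}) f"
proof (rule integrableI_bounded[OF f_meas])
  define t where "t j = \<bar>v (Suc j)\<bar> / fact (Suc j) / (exp 1 - 1)" for j
  have "AE x in lebesgue_on {0..1}.
      ennreal (norm (f x)) = (\<Sum>j. ennreal \<bar>v (Suc j)\<bar> * indicator (B (Suc j)) x)"
    using AE_lies_only_in_on
  proof eventually_elim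
    case (elim x)
    then obtain j where j: "lies_only_in x j" by blast
    then show ?case
      using suminf_indicator_lies_only_in[OF j, of "\<lambda>j. ennreal \<bar>v j\<bar>"] by (simp add: f[OF j])
  qed
  then have "(\<integral>\<^sup>+ x. ennreal (norm (f x)) \<partial>lebesgue_on {0..1})
      = (\<integral>\<^sup>+ x. (\<Sum>j. ennreal \<bar>v (Suc j)\<bar> * indicator (B (Suc j)) x) \<partial>lebesgue_on {0..1})"
    by (rule nn_integral_cong_AE)
  also have "\<dots> = (\<Sum>j. \<integral>\<^sup>+ x. ennreal \<bar>v (Suc j)\<bar> * indicator (B (Suc j)) x \<partial>lebesgue_on {0..1})"
    using sets_lebesgue_on_B[of "Suc _"]
    by (intro nn_integral_suminf borel_measurable_times_ennreal borel_measurable_const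
        borel_measurable_indicator) simp
  also have "\<dots> = (\<Sum>j. ennreal (t j))"
    by (simp add: nn_integral_on_B t_def)
  also have "\<dots> = ennreal (\<Sum>j. t j)"
  proof (rule suminf_ennreal2)
    show "0 \<le> t j" for j by (simp add: t_def)
    have "summable (\<lambda>j. \<bar>v (Suc j)\<bar> / fact (Suc j))"
      using summ by (simp only: summable_Suc_iff[where f = "\<lambda>j. \<bar>v j\<bar> / fact j"])
    then show "summable t"
      unfolding t_def by (rule summable_divide)
  qed
  finally show "(\<integral>\<^sup>+ x. ennreal (norm (f x)) \<partial>lebesgue_on {0..1}) < \<infinity>"
    by simp
qed

end

locale cantor_generators = cantor_partition B \<Gamma> A c d
  for B :: "nat \<Rightarrow> real set" and \<Gamma> :: "nat \<Rightarrow> 'i set" and A :: "nat \<Rightarrow> 'i \<Rightarrow> real set"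
    and c d :: "nat \<Rightarrow> 'i \<Rightarrow> real" +
  fixes I :: "'c set" and \<theta> :: "'c \<Rightarrow> real" and g :: "'c \<Rightarrow> real \<Rightarrow> real"
  assumes theta_gt: "\<And>\<alpha>. \<alpha> \<in> I \<Longrightarrow> \<theta> \<alpha> > 1"
    and lin_indep: "\<And>F q. F \<subseteq> I \<Longrightarrow> finite F \<Longrightarrow>
                     (\<Sum>\<alpha>\<in>F. of_rat (q \<alpha>) * ln (\<theta> \<alpha>)) = 0 \<Longrightarrow> (\<forall>\<alpha>\<in>F. q \<alpha> = 0)"
    and g_def: "\<And>\<alpha> x. g \<alpha> x = (\<Sum>j. \<theta> \<alpha> ^ Suc j * indicator (B (Suc j)) x)"
begin

lemma g_lies_only_in: "lies_only_in x j \<Longrightarrow> g \<alpha> x = \<theta> \<alpha> ^ j"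
  using suminf_indicator_lies_only_in[of x j "\<lambda>j. \<theta> \<alpha> ^ j"] by (simp add: g_def)

lemma g_measurable: "g \<alpha> \<in> borel_measurable (lebesgue_on {0..1})"
  using indicator_series_measurable[of "\<lambda>j. \<theta> \<alpha> ^ Suc j"] by (simp add: g_def[abs_def])

lemma peval_g_measurable: "(\<lambda>x. peval P (\<lambda>i. g (\<alpha> i) x)) \<in> borel_measurable (lebesgue_on {0..1})"
  using g_measurable[measurable] unfolding peval_def by measurable

lemma peval_g_lies_only_in:
  "lies_only_in x j \<Longrightarrow>
    peval P (\<lambda>i. g (\<alpha> i) x) = (\<Sum>k\<in>{k. P k \<noteq> 0}. P k * monomial_value (\<lambda>i. \<theta> (\<alpha> i)) k ^ j)"
  by (simp add: g_lies_only_in peval_eq_sum_monomial_value monomial_value_power)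

context
  fixes n :: nat and \<alpha> :: "nat \<Rightarrow> 'c" and P :: "(nat \<Rightarrow> nat) \<Rightarrow> real"
  assumes \<alpha>_I: "\<alpha> ` {..<n} \<subseteq> I" and P: "poly_in n P" "no_const_term P"
begin

lemma finite_support: "finite {k. P k \<noteq> 0}"
  using P by (simp add: poly_in_def)

lemma monomial_value_theta_gt_1: "P k \<noteq> 0 \<Longrightarrow> 1 < monomial_value (\<lambda>i. \<theta> (\<alpha> i)) k"
  using P \<alpha>_I theta_gt
  by (intro monomial_value_gt_1[of n]) (auto simp: poly_in_def no_const_term_def)

lemma monomial_value_theta_inj:
  assumes "inj_on \<alpha> {..<n}"
  shows "inj_on (monomial_value (\<lambda>i. \<theta> (\<alpha> i))) {k. \<forall>i\<ge>n. k i = 0}"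
proof (rule inj_on_monomial_value)
  show "0 < \<theta> (\<alpha> i)" if "i < n" for i
    using that \<alpha>_I theta_gt[of "\<alpha> i"] by auto
  fix q :: "nat \<Rightarrow> rat" assume q: "(\<Sum>i<n. of_rat (q i) * ln (\<theta> (\<alpha> i))) = 0"
  define q' where "q' = q \<circ> the_inv_into {..<n} \<alpha>"
  have q'_\<alpha>: "q' (\<alpha> i) = q i" if "i < n" for i
    using assms that by (simp add: q'_def the_inv_into_f_f)
  have "(\<Sum>\<beta>\<in>\<alpha> ` {..<n}. of_rat (q' \<beta>) * ln (\<theta> \<beta>)) = 0"
    using q assms by (simp add: sum.reindex q'_\<alpha>)
  then have "\<forall>\<beta>\<in>\<alpha> ` {..<n}. q' \<beta> = 0"
    using \<alpha>_I by (intro lin_indep) auto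
  then show "\<forall>i<n. q i = 0" by (simp add: q'_\<alpha>)
qed

lemma peval_g_free:
  assumes "inj_on \<alpha> {..<n}"
  shows "(AE x in lebesgue_on {0..1}. peval P (\<lambda>i. g (\<alpha> i) x) = 0) \<longleftrightarrow> (\<forall>k. P k = 0)"
proof -
  define v where "v j = (\<Sum>k\<in>{k. P k \<noteq> 0}. P k * monomial_value (\<lambda>i. \<theta> (\<alpha> i)) k ^ j)" for j
  have "(\<forall>j\<ge>1. v j = 0) \<longleftrightarrow> (\<forall>k. P k = 0)"
  proof
    assume v0: "\<forall>j\<ge>1. v j = 0"
    show "\<forall>k. P k = 0"
    proof (rule ccontr)
      assume "\<not> (\<forall>k. P k = 0)"
      then obtain k where "P k \<noteq> 0" by blast
      have "inj_on (monomial_value (\<lambda>i. \<theta> (\<alpha> i))) {k. P k \<noteq> 0}"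
        by (rule inj_on_subset[OF monomial_value_theta_inj[OF assms]])
          (use P(1) in \<open>auto simp: poly_in_def\<close>)
      then have "filterlim (\<lambda>j. \<bar>v j\<bar>) at_top sequentially"
        unfolding v_def using finite_support monomial_value_theta_gt_1 \<open>P k \<noteq> 0\<close>
        by (intro sum_powers_filterlim_at_top_inj[of _ _ k]) auto
      then obtain N where "\<And>j. N \<le> j \<Longrightarrow> 1 \<le> \<bar>v j\<bar>"
        by (auto simp: filterlim_at_top eventually_sequentially)
      then show False using v0 by (metis abs_zero max.cobounded1 max.cobounded2 not_one_le_zero)
    qed
  qed (simp add: v_def)
  then show ?thesis
    using AE_eq_0_iff_pieces[of "\<lambda>x. peval P (\<lambda>i. g (\<alpha> i) x)" v] peval_g_lies_only_in
    by (simp add: v_def)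
qed

lemma peval_g_AE_0_or_inG:
  "(AE x in lebesgue_on {0..1}. peval P (\<lambda>i. g (\<alpha> i) x) = 0) \<or> inG (\<lambda>x. peval P (\<lambda>i. g (\<alpha> i) x))"
proof -
  define F where "F x = peval P (\<lambda>i. g (\<alpha> i) x)" for x
  define v where "v j = (\<Sum>k\<in>{k. P k \<noteq> 0}. P k * monomial_value (\<lambda>i. \<theta> (\<alpha> i)) k ^ j)" for j
  have pieces: "F x = v j" if "lies_only_in x j" for x j
    using peval_g_lies_only_in[OF that] by (simp add: F_def v_def)
  have gt_1: "1 < monomial_value (\<lambda>i. \<theta> (\<alpha> i)) k" if "k \<in> {k. P k \<noteq> 0}" for k
    using monomial_value_theta_gt_1 that by simp
  consider "\<forall>j. v j = 0" | "filterlim (\<lambda>j. \<bar>v j\<bar>) at_top sequentially"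
    unfolding v_def
    using sum_powers_eq_0_or_filterlim_at_top[where \<mu> = "monomial_value (\<lambda>i. \<theta> (\<alpha> i))"
        and c = P, OF finite_support gt_1] by blast
  then have "(AE x in lebesgue_on {0..1}. F x = 0) \<or> inG F"
  proof cases
    case 1
    then show ?thesis using AE_eq_0_iff_pieces[of F v, OF pieces] by simp
  next
    case 2
    have "summable (\<lambda>j. \<bar>v j\<bar> / fact j)"
      unfolding v_def using gt_1 by (intro summable_abs_sum_powers_over_fact finite_support) force
    moreover have "F \<in> borel_measurable (lebesgue_on {0..1})"
      unfolding F_def[abs_def] by (rule peval_g_measurable)
    ultimately have "integrable (lebesgue_on {0..1}) F"
      by (intro integrable_if_pieces_summable[of F v, OF pieces])
    then show ?thesis
      using not_ess_bounded_if_pieces_unbounded[of F v, OF pieces 2] by (simp add: inG_def)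
  qed
  then show ?thesis by (simp add: F_def[abs_def])
qed

end

end

theorem mainTheorem3:
  fixes B :: "nat \<Rightarrow> real set"
    and \<Gamma> :: "nat \<Rightarrow> 'i set" and A :: "nat \<Rightarrow> 'i \<Rightarrow> real set"
    and c d :: "nat \<Rightarrow> 'i \<Rightarrow> real"
    and I :: "'c set" and \<theta> :: "'c \<Rightarrow> real"
    and g :: "'c \<Rightarrow> real \<Rightarrow> real"
  assumes built: "\<And>j. j \<ge> 1 \<Longrightarrow> cantor_built (B j) (\<Gamma> j) (A j) (c j) (d j)"
    and meas: "\<And>j. j \<ge> 1 \<Longrightarrow> measure lebesgue (B j) = 1 / ((exp 1 - 1) * fact j)"
    and overlap: "\<And>j k. j \<ge> 1 \<Longrightarrow> k \<ge> 1 \<Longrightarrow> j \<noteq> k \<Longrightarrow> measure lebesgue (B j \<inter> B k) = 0"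
    and union: "measure lebesgue (\<Union>j\<in>{1..}. B j) = 1"
    and dense: "\<And>J. nondeg_subinterval J \<Longrightarrow>
                  \<exists>j0. \<forall>j\<ge>j0. j \<ge> 1 \<longrightarrow> (\<exists>i\<in>\<Gamma> j. A j i \<subseteq> J)"
    and card: "I \<approx> (UNIV :: real set)"
    and theta_gt: "\<And>\<alpha>. \<alpha> \<in> I \<Longrightarrow> \<theta> \<alpha> > 1"
    and lin_indep: "\<And>F q. F \<subseteq> I \<Longrightarrow> finite F \<Longrightarrow>
                     (\<Sum>\<alpha>\<in>F. of_rat (q \<alpha>) * ln (\<theta> \<alpha>)) = 0 \<Longrightarrow> (\<forall>\<alpha>\<in>F. q \<alpha> = 0)"
    and g_def: "\<And>\<alpha> x. g \<alpha> x = (\<Sum>j. \<theta> \<alpha> ^ Suc j * indicator (B (Suc j)) x)"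
  shows "(\<forall>\<alpha>\<in>I. g \<alpha> \<in> borel_measurable (lebesgue_on {0..1}))
      \<and> (\<forall>n (\<alpha>::nat \<Rightarrow> 'c) P. \<alpha> ` {..<n} \<subseteq> I \<longrightarrow> inj_on \<alpha> {..<n} \<longrightarrow>
            poly_in n P \<longrightarrow> no_const_term P \<longrightarrow>
            ((AE x in lebesgue_on {0..1}. peval P (\<lambda>i. g (\<alpha> i) x) = 0) \<longleftrightarrow> (\<forall>k. P k = 0)))
      \<and> (\<forall>n (\<alpha>::nat \<Rightarrow> 'c) P. \<alpha> ` {..<n} \<subseteq> I \<longrightarrow>
            poly_in n P \<longrightarrow> no_const_term P \<longrightarrow>
            ((AE x in lebesgue_on {0..1}. peval P (\<lambda>i. g (\<alpha> i) x) = 0)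
             \<or> inG (\<lambda>x. peval P (\<lambda>i. g (\<alpha> i) x))))"
proof -
  interpret cantor_partition B \<Gamma> A c d
    using built meas overlap union by (rule cantor_partition.intro)
  interpret cantor_generators B \<Gamma> A c d I \<theta> g
    using theta_gt lin_indep g_def by unfold_locales
  show ?thesis
    by (simp add: g_measurable peval_g_free peval_g_AE_0_or_inG)
qed

end
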